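(* Let $G=(V,E)$ be a finite simple connected graph of order $n\geq 2$. Then $\alpha_0(S(G))=n=\beta_0(S(G))$ if and only if $|N(S)|\geq |S|$ for every independent set $S$ of $G$.
   Context: For a finite simple graph $G=(V,E)$, the splitting graph $S(G)$ is obtained from $G$ by adding, for each vertex $v\in V$, a new vertex $v'$, and joining $v'$ to a vertex $u\in V$ if and only if $uv\in E$ (the new vertices are pairwise non-adjacent; the edges of $G$ are kept). For a graph $H$, $\alpha_0(H)$ denotes the vertex cover number (minimum size of a set of vertices meeting every edge) and $\beta_0(H)$ the independence number (maximum size of an independent set). For $S\subseteq V$, $N(S)$ is the set of vertices of $G$ adjacent to some vertex of $S$. *)

theory Defs
  imports Main
begin

definition simple_graph :: "'a set \<Rightarrow> ('a \<Rightarrow> 'a \<Rightarrow> bool) \<Rightarrow> bool" where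
  "simple_graph V E \<longleftrightarrow> finite V \<and> (\<forall>u v. E u v \<longrightarrow> u \<in> V \<and> v \<in> V)
     \<and> (\<forall>u v. E u v \<longrightarrow> E v u) \<and> (\<forall>u. \<not> E u u)"

definition connected_graph :: "'a set \<Rightarrow> ('a \<Rightarrow> 'a \<Rightarrow> bool) \<Rightarrow> bool" where
  "connected_graph V E \<longleftrightarrow> (\<forall>u\<in>V. \<forall>v\<in>V. E\<^sup>*\<^sup>* u v)"

definition vertex_cover :: "'a set \<Rightarrow> ('a \<Rightarrow> 'a \<Rightarrow> bool) \<Rightarrow> 'a set \<Rightarrow> bool" where
  "vertex_cover V E C \<longleftrightarrow> C \<subseteq> V \<and> (\<forall>u v. E u v \<longrightarrow> u \<in> C \<or> v \<in> C)"

definition independent_set :: "'a set \<Rightarrow> ('a \<Rightarrow> 'a \<Rightarrow> bool) \<Rightarrow> 'a set \<Rightarrow> bool" where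
  "independent_set V E S \<longleftrightarrow> S \<subseteq> V \<and> (\<forall>u\<in>S. \<forall>v\<in>S. \<not> E u v)"

definition vertex_cover_number :: "'a set \<Rightarrow> ('a \<Rightarrow> 'a \<Rightarrow> bool) \<Rightarrow> nat" where
  "vertex_cover_number V E = Min (card ` {C. vertex_cover V E C})"

definition independence_number :: "'a set \<Rightarrow> ('a \<Rightarrow> 'a \<Rightarrow> bool) \<Rightarrow> nat" where
  "independence_number V E = Max (card ` {S. independent_set V E S})"

definition nbhd :: "('a \<Rightarrow> 'a \<Rightarrow> bool) \<Rightarrow> 'a set \<Rightarrow> 'a set" where
  "nbhd E S = {u. \<exists>v\<in>S. E u v}"

text \<open>Splitting graph: original vertex v is Inl v, its new copy v' is Inr v.\<close>
definition split_V :: "'a set \<Rightarrow> ('a + 'a) set" where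
  "split_V V = Inl ` V \<union> Inr ` V"

fun split_E :: "('a \<Rightarrow> 'a \<Rightarrow> bool) \<Rightarrow> 'a + 'a \<Rightarrow> 'a + 'a \<Rightarrow> bool" where
  "split_E E (Inl u) (Inl v) = E u v"
| "split_E E (Inl u) (Inr v) = E u v"
| "split_E E (Inr u) (Inl v) = E u v"
| "split_E E (Inr u) (Inr v) = False"

end

theory Submission
  imports Defs
begin

text \<open>Complements of vertex covers are exactly the independent sets, so
\<open>\<alpha>\<^sub>0 + \<beta>\<^sub>0\<close> is the number of vertices, which is \<open>2n\<close> for \<open>S(G)\<close>;
as the \<open>n\<close> new vertices are independent, both numbers equal \<open>n\<close> iff
\<open>\<beta>\<^sub>0(S(G)) \<le> n\<close>. An independent set of \<open>S(G)\<close> consists of an independent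
set \<open>A\<close> of \<open>G\<close> together with copies \<open>v'\<close> of vertices \<open>v \<notin> N(A)\<close>; it has at most
\<open>|A| + n - |N(A)|\<close> elements, with equality attainable, so
\<open>\<beta>\<^sub>0(S(G)) \<le> n\<close> iff \<open>|A| \<le> |N(A)|\<close> for every independent \<open>A\<close>.\<close>

lemma finite_independent_sets:
  "finite V \<Longrightarrow> finite {S. independent_set V E S}"
  by (rule finite_subset[of _ "Pow V"]) (auto simp: independent_set_def)

lemma finite_vertex_covers:
  "finite V \<Longrightarrow> finite {C. vertex_cover V E C}"
  by (rule finite_subset[of _ "Pow V"]) (auto simp: vertex_cover_def)

lemma card_le_independence_number:
  assumes "finite V" and "independent_set V E S"
  shows "card S \<le> independence_number V E"
  unfolding independence_number_def
  using assms by (intro Max_ge) (auto intro: finite_independent_sets)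

lemma independence_number_le_iff:
  assumes "finite V"
  shows "independence_number V E \<le> k \<longleftrightarrow> (\<forall>S. independent_set V E S \<longrightarrow> card S \<le> k)"
proof -
  have "independent_set V E {}"
    by (simp add: independent_set_def)
  then show ?thesis
    unfolding independence_number_def using finite_independent_sets[OF assms]
    by (subst Max_le_iff) auto
qed

lemma obtain_maximum_independent_set:
  assumes "finite V"
  obtains S where "independent_set V E S" and "card S = independence_number V E"
proof -
  have "independent_set V E {}"
    by (simp add: independent_set_def)
  then have "independence_number V E \<in> card ` {S. independent_set V E S}"
    unfolding independence_number_def using finite_independent_sets[OF assms]
    by (intro Max_in) auto
  then show ?thesis
    using that by auto
qed

lemma vertex_cover_number_le_card:
  assumes "finite V" and "vertex_cover V E C"
  shows "vertex_cover_number V E \<le> card C"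
  unfolding vertex_cover_number_def
  using assms by (intro Min_le) (auto intro: finite_vertex_covers)

lemma obtain_minimum_vertex_cover:
  assumes "finite V" and "\<And>u v. E u v \<Longrightarrow> u \<in> V"
  obtains C where "vertex_cover V E C" and "card C = vertex_cover_number V E"
proof -
  have "vertex_cover V E V"
    using assms(2) by (auto simp: vertex_cover_def)
  then have "vertex_cover_number V E \<in> card ` {C. vertex_cover V E C}"
    unfolding vertex_cover_number_def using finite_vertex_covers[OF assms(1)]
    by (intro Min_in) auto
  then show ?thesis
    using that by auto
qed

lemma vertex_cover_Diff_independent_set:
  assumes "\<And>u v. E u v \<Longrightarrow> u \<in> V \<and> v \<in> V" and "independent_set V E S"
  shows "vertex_cover V E (V - S)"
  using assms by (auto simp: vertex_cover_def independent_set_def)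

lemma independent_set_Diff_vertex_cover:
  "vertex_cover V E C \<Longrightarrow> independent_set V E (V - C)"
  by (auto simp: vertex_cover_def independent_set_def)

theorem vertex_cover_number_plus_independence_number:
  assumes "finite V" and edges: "\<And>u v. E u v \<Longrightarrow> u \<in> V \<and> v \<in> V"
  shows "vertex_cover_number V E + independence_number V E = card V"
proof -
  obtain S where S: "independent_set V E S" "card S = independence_number V E"
    using obtain_maximum_independent_set[OF assms(1)] .
  obtain C where C: "vertex_cover V E C" "card C = vertex_cover_number V E"
    using obtain_minimum_vertex_cover[OF assms(1)] edges by blast
  have "S \<subseteq> V" "C \<subseteq> V"
    using S(1) C(1) by (auto simp: independent_set_def vertex_cover_def)
  then have "card (V - S) = card V - card S" "card (V - C) = card V - card C"
    "card S \<le> card V" "card C \<le> card V"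
    using assms(1) by (auto simp: card_Diff_subset finite_subset card_mono)
  moreover have "vertex_cover_number V E \<le> card (V - S)"
    using vertex_cover_number_le_card[OF assms(1) vertex_cover_Diff_independent_set[OF edges S(1)]] .
  moreover have "card (V - C) \<le> independence_number V E"
    using card_le_independence_number[OF assms(1) independent_set_Diff_vertex_cover[OF C(1)]] .
  ultimately show ?thesis
    using S(2) C(2) by linarith
qed

lemma split_V_eq_Plus: "split_V V = V <+> V"
  by (simp add: split_V_def Plus_def)

lemma Plus_vimage_Inl_Inr: "I = Inl -` I <+> Inr -` I"
proof (rule set_eqI)
  fix x :: "'a + 'b"
  show "x \<in> I \<longleftrightarrow> x \<in> Inl -` I <+> Inr -` I"
    by (cases x) auto
qed

lemma all_set_Plus_iff: "(\<forall>I. Q I) \<longleftrightarrow> (\<forall>A B. Q (A <+> B))"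
  using Plus_vimage_Inl_Inr by metis

lemma split_E_imp_in_split_V:
  assumes "simple_graph V E" and "split_E E x y"
  shows "x \<in> split_V V \<and> y \<in> split_V V"
  using assms by (cases x; cases y) (auto simp: simple_graph_def split_V_def)

lemma nbhd_subset:
  "(\<And>u v. E u v \<Longrightarrow> u \<in> V) \<Longrightarrow> nbhd E S \<subseteq> V"
  by (auto simp: nbhd_def)

lemma independent_set_split_Plus_iff:
  assumes sym: "\<And>u v. E u v \<Longrightarrow> E v u"
  shows "independent_set (split_V V) (split_E E) (A <+> B)
           \<longleftrightarrow> independent_set V E A \<and> B \<subseteq> V - nbhd E A"
proof -
  have "(\<forall>x\<in>A <+> B. \<forall>y\<in>A <+> B. \<not> split_E E x y)
          \<longleftrightarrow> (\<forall>u\<in>A. \<forall>v\<in>A. \<not> E u v) \<and> (\<forall>b\<in>B. \<forall>a\<in>A. \<not> E b a)"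
    by (auto simp: Plus_def ball_Un dest: sym)
  then show ?thesis
    unfolding independent_set_def split_V_eq_Plus nbhd_def by (auto simp: Plus_def)
qed

lemma card_le_independence_number_split:
  assumes "simple_graph V E"
  shows "card V \<le> independence_number (split_V V) (split_E E)"
proof -
  have "independent_set (split_V V) (split_E E) ({} <+> V)"
    using assms by (subst independent_set_split_Plus_iff)
      (auto simp: simple_graph_def independent_set_def nbhd_def)
  moreover have "finite V"
    using assms by (simp add: simple_graph_def)
  ultimately show ?thesis
    using card_le_independence_number[of "split_V V" _ "{} <+> V"]
    by (simp add: split_V_eq_Plus card_Plus)
qed

theorem independence_number_split_le_card_iff:
  assumes "simple_graph V E"
  shows "independence_number (split_V V) (split_E E) \<le> card V
           \<longleftrightarrow> (\<forall>A. independent_set V E A \<longrightarrow> card A \<le> card (nbhd E A))"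
proof -
  have fin: "finite V" and sym: "\<And>u v. E u v \<Longrightarrow> E v u"
    using assms by (auto simp: simple_graph_def)
  have N: "nbhd E A \<subseteq> V" for A
    using assms by (intro nbhd_subset) (auto simp: simple_graph_def)
  then have card_V_Diff_N: "card (V - nbhd E A) = card V - card (nbhd E A)"
    and card_N: "card (nbhd E A) \<le> card V" for A
    using fin finite_subset[OF N fin] by (auto simp: card_Diff_subset card_mono)
  have card_Plus_le: "card (A <+> B) \<le> card A + (card V - card (nbhd E A))"
    if "A \<subseteq> V" "B \<subseteq> V - nbhd E A" for A B
    using that fin card_V_Diff_N[of A] card_mono[of "V - nbhd E A" B]
    by (simp add: card_Plus finite_subset)
  have "(\<forall>I. independent_set (split_V V) (split_E E) I \<longrightarrow> card I \<le> card V)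
          \<longleftrightarrow> (\<forall>A B. independent_set V E A \<and> B \<subseteq> V - nbhd E A \<longrightarrow> card (A <+> B) \<le> card V)"
    by (subst all_set_Plus_iff) (simp add: independent_set_split_Plus_iff[OF sym])
  also have "\<dots> \<longleftrightarrow> (\<forall>A. independent_set V E A \<longrightarrow> card A \<le> card (nbhd E A))"
  proof (intro iffI allI impI)
    fix A assume "\<forall>A B. independent_set V E A \<and> B \<subseteq> V - nbhd E A \<longrightarrow> card (A <+> B) \<le> card V"
      and A: "independent_set V E A"
    then have "card (A <+> (V - nbhd E A)) \<le> card V"
      by blast
    then show "card A \<le> card (nbhd E A)"
      using A fin card_V_Diff_N[of A] card_N[of A] finite_subset[of A V]
      by (simp add: card_Plus independent_set_def)
  next
    fix A B assume "\<forall>A. independent_set V E A \<longrightarrow> card A \<le> card (nbhd E A)"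
      and AB: "independent_set V E A \<and> B \<subseteq> V - nbhd E A"
    then have "card A \<le> card (nbhd E A)" "A \<subseteq> V"
      by (simp_all add: independent_set_def)
    then show "card (A <+> B) \<le> card V"
      using card_Plus_le[of A B] card_N[of A] AB by linarith
  qed
  finally show ?thesis
    using independence_number_le_iff[of "split_V V"] fin by (simp add: split_V_def)
qed

theorem corollary2:
  fixes V :: "'a set" and E :: "'a \<Rightarrow> 'a \<Rightarrow> bool"
  assumes "simple_graph V E" and "connected_graph V E" and "card V \<ge> 2"
  shows "(vertex_cover_number (split_V V) (split_E E) = card V
            \<and> independence_number (split_V V) (split_E E) = card V)
         \<longleftrightarrow> (\<forall>S. independent_set V E S \<longrightarrow> card (nbhd E S) \<ge> card S)"
proof -
  have fin: "finite V"
    using assms(1) by (simp add: simple_graph_def)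
  have "vertex_cover_number (split_V V) (split_E E) + independence_number (split_V V) (split_E E)
          = 2 * card V"
    using vertex_cover_number_plus_independence_number[of "split_V V" "split_E E"]
      split_E_imp_in_split_V[OF assms(1)] fin
    by (simp add: split_V_eq_Plus card_Plus)
  moreover have "card V \<le> independence_number (split_V V) (split_E E)"
    using card_le_independence_number_split[OF assms(1)] .
  ultimately show ?thesis
    using independence_number_split_le_card_iff[OF assms(1)] by auto
qed

end
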